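(* Let $T>0$, let $H:\mathbb{R}^n\times\mathbb{R}^n\to\mathbb{R}$ satisfy: $p\mapsto H(x,p)$ convex for every $x$, and for some $M\geqslant0$, $|H(x,p)-H(x,q)|\leqslant M(1+|x|)|p-q|$ and $|H(x,p)-H(y,p)|\leqslant M(1+|p|)|x-y|$ for all $x,y,p,q\in\mathbb{R}^n$. Let $g_0,g_T\in C(\mathbb{R}^n,\mathbb{R})$, let $L(x,v)=\sup_{p\in\mathbb{R}^n}\{\langle v,p\rangle-H(x,p)\}$, and define $U(t_0,x_0)=\inf\{g_0(x(0))+\int_0^{t_0}L(x(s),\dot x(s))\,ds \mid x\in\mathcal{A}([0,t_0],\mathbb{R}^n),\ x(t_0)=x_0\}$, $W(t_0,x_0)=\sup\{g_T(x(T))-\int_{t_0}^{T}L(x(s),\dot x(s))\,ds \mid x\in\mathcal{A}([t_0,T],\mathbb{R}^n),\ x(t_0)=x_0\}$. If $\bar x\in\mathcal{A}([0,T],\mathbb{R}^n)$ is a maximal optimal trajectory in the Bolza problem and $U(T,\cdot)=W(T,\cdot)$, then $\bar x$ is a maximal optimal trajectory in the inverse Bolza problem and $U(t,\bar x(t))=W(t,\bar x(t))$ for all $t\in[0,T]$.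
   Context: $\mathcal{A}([a,b],\mathbb{R}^n)$ denotes the absolutely continuous functions $[a,b]\to\mathbb{R}^n$. An $\bar x\in\mathcal{A}([0,T],\mathbb{R}^n)$ is a maximal optimal trajectory in the Bolza problem if $U(T,\bar x(T))=U(0,\bar x(0))+\int_0^T L(\bar x(s),\dot{\bar x}(s))\,ds$; an $\tilde x\in\mathcal{A}([0,T],\mathbb{R}^n)$ is a maximal optimal trajectory in the inverse Bolza problem if $W(0,\tilde x(0))=W(T,\tilde x(T))-\int_0^T L(\tilde x(s),\dot{\tilde x}(s))\,ds$. *)

theory Defs
  imports "HOL-Analysis.Analysis"
begin

definition abs_cont_on :: "real \<Rightarrow> real \<Rightarrow> (real \<Rightarrow> 'a::real_normed_vector) \<Rightarrow> bool" where
  "abs_cont_on a b f \<longleftrightarrow>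
     (\<forall>e>0. \<exists>d>0. \<forall>I::(real \<times> real) set.
        finite I \<and> (\<forall>(u,v)\<in>I. a \<le> u \<and> u \<le> v \<and> v \<le> b)
        \<and> pairwise (\<lambda>(u,v) (u',v'). v \<le> u' \<or> v' \<le> u) I
        \<and> (\<Sum>(u,v)\<in>I. v - u) < d
        \<longrightarrow> (\<Sum>(u,v)\<in>I. norm (f v - f u)) < e)"

definition lagr :: "('a::euclidean_space \<Rightarrow> 'a \<Rightarrow> real) \<Rightarrow> 'a \<Rightarrow> 'a \<Rightarrow> ereal" where
  "lagr H x v = (SUP p. ereal (inner v p - H x p))"

definition eintegral :: "real \<Rightarrow> real \<Rightarrow> (real \<Rightarrow> ereal) \<Rightarrow> ereal" where
  "eintegral a b f =
     enn2ereal (\<integral>\<^sup>+ s\<in>{a..b}. e2ennreal (f s) \<partial>lebesgue)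
   - enn2ereal (\<integral>\<^sup>+ s\<in>{a..b}. e2ennreal (- f s) \<partial>lebesgue)"

definition action :: "('a::euclidean_space \<Rightarrow> 'a \<Rightarrow> real) \<Rightarrow> real \<Rightarrow> real \<Rightarrow> (real \<Rightarrow> 'a) \<Rightarrow> ereal" where
  "action H a b x = eintegral a b (\<lambda>s. lagr H (x s) (vector_derivative x (at s)))"

definition valU :: "('a::euclidean_space \<Rightarrow> 'a \<Rightarrow> real) \<Rightarrow> ('a \<Rightarrow> real) \<Rightarrow> real \<Rightarrow> 'a \<Rightarrow> ereal" where
  "valU H g0 t0 x0 = (INF x\<in>{x. abs_cont_on 0 t0 x \<and> x t0 = x0}. ereal (g0 (x 0)) + action H 0 t0 x)"

definition valW :: "('a::euclidean_space \<Rightarrow> 'a \<Rightarrow> real) \<Rightarrow> ('a \<Rightarrow> real) \<Rightarrow> real \<Rightarrow> real \<Rightarrow> 'a \<Rightarrow> ereal" where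
  "valW H gT T t0 x0 = (SUP x\<in>{x. abs_cont_on t0 T x \<and> x t0 = x0}. ereal (gT (x T)) - action H t0 T x)"

end

theory Submission
  imports Defs
begin

(* U(T,.) = gT, and W <= U everywhere by dynamic programming: a path admissible for U(t,y)
   followed by one admissible for W(t,y) is admissible for U(T,.), so its total cost bounds gT
   from above. Along the optimal trajectory xbar, splitting the action at t gives
   U(t, xbar t) <= g0 (xbar 0) + A[0,t] = gT (xbar T) - A[t,T] <= W(t, xbar t).
   Both steps need the action to be additive and never -infinity; this holds because
   L(x,v) >= -H(x,0) and H(.,0) is continuous. *)

lemma nn_integral_add_le:
  "(\<integral>\<^sup>+x. f x \<partial>M) + (\<integral>\<^sup>+x. g x \<partial>M) \<le> (\<integral>\<^sup>+x. f x + g x \<partial>M)"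
proof -
  let ?F = "{s. simple_function M s \<and> s \<le> f}" and ?G = "{s. simple_function M s \<and> s \<le> g}"
  have "(\<lambda>_. 0) \<in> ?F" "(\<lambda>_. 0) \<in> ?G" by (auto simp: le_fun_def)
  then have F: "?F \<noteq> {}" and G: "?G \<noteq> {}" by blast+
  have "(\<integral>\<^sup>+x. f x \<partial>M) + (\<integral>\<^sup>+x. g x \<partial>M)
      = (SUP s\<in>?F. SUP r\<in>?G. integral\<^sup>S M s + integral\<^sup>S M r)"
    unfolding nn_integral_def by (simp add: ennreal_SUP_add_left[OF F, symmetric] ennreal_SUP_add_right[OF G, symmetric])
  also have "\<dots> \<le> (\<integral>\<^sup>+x. f x + g x \<partial>M)"
  proof (intro SUP_least, clarify)
    fix s r assume s: "simple_function M s" "s \<le> f" and r: "simple_function M r" "r \<le> g"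
    then have "integral\<^sup>S M s + integral\<^sup>S M r = (\<integral>\<^sup>+x. s x + r x \<partial>M)"
      by (simp add: nn_integral_eq_simple_integral)
    also have "\<dots> \<le> (\<integral>\<^sup>+x. f x + g x \<partial>M)"
      using s r by (intro nn_integral_mono add_mono) (auto simp: le_fun_def)
    finally show "integral\<^sup>S M s + integral\<^sup>S M r \<le> (\<integral>\<^sup>+x. f x + g x \<partial>M)" .
  qed
  finally show ?thesis .
qed

lemma set_nn_integral_Un_le:
  assumes "A \<in> sets M" "B \<in> sets M"
  shows "(\<integral>\<^sup>+x\<in>A \<union> B. f x \<partial>M) \<le> (\<integral>\<^sup>+x\<in>A. f x \<partial>M) + (\<integral>\<^sup>+x\<in>B. f x \<partial>M)"
  unfolding nn_integral_def[of M "\<lambda>x. f x * indicator (A \<union> B) x"]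
proof (intro SUP_least, clarify)
  fix s assume s: "simple_function M s" "s \<le> (\<lambda>x. f x * indicator (A \<union> B) x)"
  have sA: "simple_function M (\<lambda>x. s x * indicator A x)" and sB: "simple_function M (\<lambda>x. s x * indicator B x)"
    using s(1) assms by auto
  have "integral\<^sup>S M s \<le> integral\<^sup>S M (\<lambda>x. s x * indicator A x + s x * indicator B x)"
  proof (intro simple_integral_mono)
    fix x
    show "s x \<le> s x * indicator A x + s x * indicator B x"
      using le_funD[OF s(2), of x] by (auto split: split_indicator)
  qed (use s sA sB in auto)
  also have "\<dots> = (\<integral>\<^sup>+x. s x * indicator A x \<partial>M) + (\<integral>\<^sup>+x. s x * indicator B x \<partial>M)"
    using sA sB by (simp add: nn_integral_eq_simple_integral)
  also have "\<dots> \<le> (\<integral>\<^sup>+x\<in>A. f x \<partial>M) + (\<integral>\<^sup>+x\<in>B. f x \<partial>M)"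
  proof (intro add_mono nn_integral_mono)
    fix x
    show "s x * indicator A x \<le> f x * indicator A x" "s x * indicator B x \<le> f x * indicator B x"
      using le_funD[OF s(2), of x] by (auto split: split_indicator)
  qed
  finally show "integral\<^sup>S M s \<le> (\<integral>\<^sup>+x\<in>A. f x \<partial>M) + (\<integral>\<^sup>+x\<in>B. f x \<partial>M)" .
qed

text \<open>Unlike \<open>nn_integral_disjoint_pair\<close>, this needs no measurability of f: the Lagrangian
  along a path is not known to be measurable.\<close>
lemma set_nn_integral_disjoint_Un:
  assumes "A \<in> sets M" "B \<in> sets M" "A \<inter> B = {}"
  shows "(\<integral>\<^sup>+x\<in>A \<union> B. f x \<partial>M) = (\<integral>\<^sup>+x\<in>A. f x \<partial>M) + (\<integral>\<^sup>+x\<in>B. f x \<partial>M)"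
proof (rule antisym)
  have "(\<integral>\<^sup>+x\<in>A. f x \<partial>M) + (\<integral>\<^sup>+x\<in>B. f x \<partial>M) \<le> (\<integral>\<^sup>+x. f x * indicator A x + f x * indicator B x \<partial>M)"
    by (rule nn_integral_add_le)
  also have "\<dots> = (\<integral>\<^sup>+x\<in>A \<union> B. f x \<partial>M)"
    using assms(3) by (intro nn_integral_cong) (auto split: split_indicator)
  finally show "(\<integral>\<^sup>+x\<in>A. f x \<partial>M) + (\<integral>\<^sup>+x\<in>B. f x \<partial>M) \<le> (\<integral>\<^sup>+x\<in>A \<union> B. f x \<partial>M)" .
qed (rule set_nn_integral_Un_le[OF assms(1,2)])

lemma set_nn_integral_Icc_split:
  fixes f :: "real \<Rightarrow> ennreal"
  assumes "a \<le> t" "t \<le> b"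
  shows "(\<integral>\<^sup>+s\<in>{a..b}. f s \<partial>lebesgue) = (\<integral>\<^sup>+s\<in>{a..t}. f s \<partial>lebesgue) + (\<integral>\<^sup>+s\<in>{t..b}. f s \<partial>lebesgue)"
proof -
  have "{a..b} = {a..<t} \<union> {t..b}" using assms by auto
  then have "(\<integral>\<^sup>+s\<in>{a..b}. f s \<partial>lebesgue) = (\<integral>\<^sup>+s\<in>{a..<t}. f s \<partial>lebesgue) + (\<integral>\<^sup>+s\<in>{t..b}. f s \<partial>lebesgue)"
    by (simp only:) (rule set_nn_integral_disjoint_Un; auto)
  moreover have "(\<integral>\<^sup>+s\<in>{a..<t}. f s \<partial>lebesgue) = (\<integral>\<^sup>+s\<in>{a..t}. f s \<partial>lebesgue)"
  proof (rule nn_integral_null_delta)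
    have "{t} \<in> null_sets lebesgue" by (simp add: null_sets_completionI)
    then show "sym_diff {a..<t} {a..t} \<in> null_sets lebesgue"
      by (rule null_sets_subset) auto
  qed auto
  ultimately show ?thesis by simp
qed

lemma eintegral_cong:
  assumes "\<And>s. a < s \<Longrightarrow> s < b \<Longrightarrow> f s = g s"
  shows "eintegral a b f = eintegral a b g"
proof -
  have "AE s in lebesgue. s \<noteq> a" "AE s in lebesgue. s \<noteq> b"
    by (simp_all add: AE_completion AE_lborel_singleton)
  then have ae: "AE s in lebesgue. s \<in> {a..b} \<longrightarrow> f s = g s"
    by eventually_elim (simp add: assms)
  have "(\<integral>\<^sup>+s\<in>{a..b}. e2ennreal (h (f s)) \<partial>lebesgue) = (\<integral>\<^sup>+s\<in>{a..b}. e2ennreal (h (g s)) \<partial>lebesgue)" for h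
    by (intro nn_integral_cong_AE eventually_mono[OF ae]) (simp split: split_indicator)
  from this[of id] this[of uminus] show ?thesis
    by (simp add: eintegral_def)
qed

lemma eintegral_same [simp]: "eintegral a a f = 0"
  using eintegral_cong[of a a f "\<lambda>_. 0"] by (simp add: eintegral_def)

lemma set_nn_integral_neg_part_finite:
  fixes f :: "real \<Rightarrow> ereal"
  assumes "\<And>s. s \<in> {a..b} \<Longrightarrow> ereal c \<le> f s"
  shows "(\<integral>\<^sup>+s\<in>{a..b}. e2ennreal (- f s) \<partial>lebesgue) < top"
proof -
  have "(\<integral>\<^sup>+s\<in>{a..b}. e2ennreal (- f s) \<partial>lebesgue) \<le> (\<integral>\<^sup>+s. ennreal (- c) * indicator {a..b} s \<partial>lebesgue)"
  proof (intro nn_integral_mono)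
    fix s
    have "s \<in> {a..b} \<Longrightarrow> e2ennreal (- f s) \<le> e2ennreal (ereal (- c))"
      using assms[of s] by (intro e2ennreal_mono) (simp flip: uminus_ereal.simps)
    then show "e2ennreal (- f s) * indicator {a..b} s \<le> ennreal (- c) * indicator {a..b} s"
      by (simp split: split_indicator)
  qed
  also have "\<dots> < top"
    by (simp add: nn_integral_cmult_indicator ennreal_mult_less_top emeasure_lborel_Icc_eq)
  finally show ?thesis .
qed

lemma ereal_add_diff_add:
  fixes p q :: ereal
  assumes "0 \<le> p" "0 \<le> q"
  shows "(p + q) - ereal (m + n) = (p - ereal m) + (q - ereal n)"
  using assms by (cases p; cases q) simp_all

lemma eintegral_split:
  fixes f :: "real \<Rightarrow> ereal"
  assumes "a \<le> t" "t \<le> b" and bdd: "\<And>s. s \<in> {a..b} \<Longrightarrow> ereal c \<le> f s"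
  shows "eintegral a b f = eintegral a t f + eintegral t b f"
proof -
  define P where "P a b = enn2ereal (\<integral>\<^sup>+s\<in>{a..b}. e2ennreal (f s) \<partial>lebesgue)" for a b
  define N where "N a b = enn2ereal (\<integral>\<^sup>+s\<in>{a..b}. e2ennreal (- f s) \<partial>lebesgue)" for a b
  have split: "P a b = P a t + P t b" "N a b = N a t + N t b"
    unfolding P_def N_def set_nn_integral_Icc_split[OF assms(1,2)] by (simp_all add: plus_ennreal.rep_eq)
  have "N a b \<noteq> \<infinity>"
    using set_nn_integral_neg_part_finite[of a b c f] bdd by (simp add: N_def)
  moreover have "0 \<le> P a t" "0 \<le> P t b" "0 \<le> N a t" "0 \<le> N t b"
    by (simp_all add: P_def N_def)
  ultimately obtain n1 n2 where "N a t = ereal n1" "N t b = ereal n2"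
    unfolding split by (cases "N a t"; cases "N t b") simp_all
  with \<open>0 \<le> P a t\<close> \<open>0 \<le> P t b\<close> show ?thesis
    unfolding eintegral_def P_def[symmetric] N_def[symmetric] split
    by (simp add: ereal_add_diff_add)
qed

lemma eintegral_neq_MInfty:
  fixes f :: "real \<Rightarrow> ereal"
  assumes "\<And>s. s \<in> {a..b} \<Longrightarrow> ereal c \<le> f s"
  shows "eintegral a b f \<noteq> -\<infinity>"
proof -
  let ?P = "enn2ereal (\<integral>\<^sup>+s\<in>{a..b}. e2ennreal (f s) \<partial>lebesgue)"
  let ?N = "enn2ereal (\<integral>\<^sup>+s\<in>{a..b}. e2ennreal (- f s) \<partial>lebesgue)"
  have "?N \<noteq> \<infinity>" "0 \<le> ?N" "0 \<le> ?P"
    using set_nn_integral_neg_part_finite[of a b c f] assms by simp_all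
  then show ?thesis
    unfolding eintegral_def by (cases ?P; cases ?N) simp_all
qed

definition nonoverlapping_intervals :: "real \<Rightarrow> real \<Rightarrow> (real \<times> real) set \<Rightarrow> bool" where
  "nonoverlapping_intervals a b I \<longleftrightarrow> finite I \<and> (\<forall>(u,v)\<in>I. a \<le> u \<and> u \<le> v \<and> v \<le> b)
     \<and> pairwise (\<lambda>(u,v) (u',v'). v \<le> u' \<or> v' \<le> u) I"

lemma abs_cont_on_iff:
  "abs_cont_on a b f \<longleftrightarrow> (\<forall>e>0. \<exists>d>0. \<forall>I. nonoverlapping_intervals a b I \<longrightarrow>
     (\<Sum>(u,v)\<in>I. v - u) < d \<longrightarrow> (\<Sum>(u,v)\<in>I. norm (f v - f u)) < e)"
  unfolding abs_cont_on_def nonoverlapping_intervals_def by (simp add: imp_conjL)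

lemma abs_cont_onI:
  assumes "\<And>e. e > 0 \<Longrightarrow> \<exists>d>0. \<forall>I. nonoverlapping_intervals a b I \<longrightarrow>
     (\<Sum>(u,v)\<in>I. v - u) < d \<longrightarrow> (\<Sum>(u,v)\<in>I. norm (f v - f u)) < e"
  shows "abs_cont_on a b f"
  using assms by (simp add: abs_cont_on_iff)

lemma abs_cont_onE:
  assumes "abs_cont_on a b f" "e > 0"
  obtains d where "d > 0" and "\<And>I. nonoverlapping_intervals a b I \<Longrightarrow>
     (\<Sum>(u,v)\<in>I. v - u) < d \<Longrightarrow> (\<Sum>(u,v)\<in>I. norm (f v - f u)) < e"
  using assms by (auto simp: abs_cont_on_iff)

lemma abs_cont_on_const: "abs_cont_on a b (\<lambda>_. y)"
  by (rule abs_cont_onI) (auto intro: exI[of _ 1])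

lemma abs_cont_on_add:
  assumes f: "abs_cont_on a b f" and g: "abs_cont_on a b g"
  shows "abs_cont_on a b (\<lambda>s. f s + g s)"
proof (rule abs_cont_onI)
  fix e :: real assume "e > 0"
  then have "e / 2 > 0" by simp
  with f g obtain d1 d2 where "d1 > 0" "d2 > 0"
    and f_small: "\<And>I. nonoverlapping_intervals a b I \<Longrightarrow> (\<Sum>(u,v)\<in>I. v - u) < d1 \<Longrightarrow>
      (\<Sum>(u,v)\<in>I. norm (f v - f u)) < e / 2"
    and g_small: "\<And>I. nonoverlapping_intervals a b I \<Longrightarrow> (\<Sum>(u,v)\<in>I. v - u) < d2 \<Longrightarrow>
      (\<Sum>(u,v)\<in>I. norm (g v - g u)) < e / 2"
    by (metis abs_cont_onE)
  show "\<exists>d>0. \<forall>I. nonoverlapping_intervals a b I \<longrightarrow> (\<Sum>(u,v)\<in>I. v - u) < d \<longrightarrow>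
      (\<Sum>(u,v)\<in>I. norm ((f v + g v) - (f u + g u))) < e"
  proof (intro exI[of _ "min d1 d2"] conjI allI impI)
    fix I assume I: "nonoverlapping_intervals a b I" and len: "(\<Sum>(u,v)\<in>I. v - u) < min d1 d2"
    have "(\<Sum>(u,v)\<in>I. norm ((f v + g v) - (f u + g u)))
        \<le> (\<Sum>(u,v)\<in>I. norm (f v - f u)) + (\<Sum>(u,v)\<in>I. norm (g v - g u))"
      unfolding split_def sum.distrib[symmetric]
      by (intro sum_mono) (metis add_diff_add norm_triangle_ineq)
    also have "\<dots> < e / 2 + e / 2"
      using I len by (intro add_strict_mono f_small g_small) auto
    finally show "(\<Sum>(u,v)\<in>I. norm ((f v + g v) - (f u + g u))) < e" by simp
  qed (use \<open>d1 > 0\<close> \<open>d2 > 0\<close> in auto)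
qed

lemma nonoverlapping_intervalsD:
  assumes "nonoverlapping_intervals a b I" "(u,v) \<in> I"
  shows "a \<le> u" "u \<le> v" "v \<le> b"
  using assms by (auto simp: nonoverlapping_intervals_def)

lemma nonoverlapping_intervals_disjoint:
  assumes "nonoverlapping_intervals a b I" "(u,v) \<in> I" "(u',v') \<in> I" "(u,v) \<noteq> (u',v')"
  shows "v \<le> u' \<or> v' \<le> u"
proof -
  have "pairwise (\<lambda>(u,v) (u',v'). v \<le> u' \<or> v' \<le> u) I"
    using assms(1) by (simp add: nonoverlapping_intervals_def)
  from pairwiseD[OF this assms(2-4)] show ?thesis by simp
qed

lemma nonoverlapping_intervals_image_collapse:
  fixes \<phi> :: "real \<Rightarrow> real"
  assumes I: "nonoverlapping_intervals a b I" and mono: "mono_on {a..b} \<phi>"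
    and "(u,v) \<in> I" "(u',v') \<in> I" "(u,v) \<noteq> (u',v')" "\<phi> u = \<phi> u'" "\<phi> v = \<phi> v'"
  shows "\<phi> u = \<phi> v"
proof -
  have "v \<le> u' \<or> v' \<le> u"
    using nonoverlapping_intervals_disjoint[OF I assms(3-5)] .
  moreover have "a \<le> u" "u \<le> v" "v \<le> b" "a \<le> u'" "u' \<le> v'" "v' \<le> b"
    using nonoverlapping_intervalsD[OF I assms(3)] nonoverlapping_intervalsD[OF I assms(4)] by auto
  ultimately show ?thesis
    using mono_onD[OF mono, of u v] mono_onD[OF mono, of v u'] mono_onD[OF mono, of v' u] assms(6,7)
    by (auto intro: order.antisym)
qed

lemma sum_nonoverlapping_intervals_image:
  fixes \<phi> :: "real \<Rightarrow> real"
  assumes I: "nonoverlapping_intervals a b I" and mono: "mono_on {a..b} \<phi>" and "\<And>p. g p p = 0"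
  shows "(\<Sum>(u,v)\<in>(\<lambda>(u,v). (\<phi> u, \<phi> v)) ` I. g u v) = (\<Sum>(u,v)\<in>I. g (\<phi> u) (\<phi> v))"
proof -
  have "(\<Sum>(u,v)\<in>(\<lambda>(u,v). (\<phi> u, \<phi> v)) ` I. g u v)
      = (\<Sum>i\<in>I. (\<lambda>(u,v). g u v) ((\<lambda>(u,v). (\<phi> u, \<phi> v)) i))"
  proof (rule sum.reindex_nontrivial[unfolded comp_def])
    show "finite I" using I by (simp add: nonoverlapping_intervals_def)
    fix i j assume "i \<in> I" "j \<in> I" "i \<noteq> j" "(\<lambda>(u,v). (\<phi> u, \<phi> v)) i = (\<lambda>(u,v). (\<phi> u, \<phi> v)) j"
    then show "(\<lambda>(u,v). g u v) ((\<lambda>(u,v). (\<phi> u, \<phi> v)) i) = 0"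
      using nonoverlapping_intervals_image_collapse[OF I mono, of "fst i" "snd i" "fst j" "snd j"] assms(3)
      by (cases i; cases j) auto
  qed
  then show ?thesis by (simp add: split_def)
qed

lemma nonoverlapping_intervals_image:
  assumes I: "nonoverlapping_intervals a b I" and mono: "mono_on {a..b} \<phi>" and range: "\<phi> ` {a..b} \<subseteq> {c..d}"
  shows "nonoverlapping_intervals c d ((\<lambda>(u,v). (\<phi> u, \<phi> v)) ` I)"
  unfolding nonoverlapping_intervals_def
proof (intro conjI)
  show "finite ((\<lambda>(u,v). (\<phi> u, \<phi> v)) ` I)"
    using I by (simp add: nonoverlapping_intervals_def)
  have "c \<le> \<phi> u \<and> \<phi> u \<le> \<phi> v \<and> \<phi> v \<le> d" if "(u,v) \<in> I" for u v
    using nonoverlapping_intervalsD[OF I that] range[unfolded image_subset_iff] mono_onD[OF mono, of u v]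
    by auto
  then show "\<forall>(u,v)\<in>(\<lambda>(u,v). (\<phi> u, \<phi> v)) ` I. c \<le> u \<and> u \<le> v \<and> v \<le> d"
    by auto
  have "\<phi> v \<le> \<phi> u' \<or> \<phi> v' \<le> \<phi> u"
    if "(u,v) \<in> I" "(u',v') \<in> I" "(u,v) \<noteq> (u',v')" for u v u' v'
    using nonoverlapping_intervals_disjoint[OF I that] nonoverlapping_intervalsD[OF I that(1)]
      nonoverlapping_intervalsD[OF I that(2)] mono_onD[OF mono, of v u'] mono_onD[OF mono, of v' u]
    by auto
  then show "pairwise (\<lambda>(u,v) (u',v'). v \<le> u' \<or> v' \<le> u) ((\<lambda>(u,v). (\<phi> u, \<phi> v)) ` I)"
    by (intro pairwise_imageI) auto
qed

lemma abs_cont_on_compose: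
  assumes x: "abs_cont_on c d x" and mono: "mono_on {a..b} \<phi>" and range: "\<phi> ` {a..b} \<subseteq> {c..d}"
    and nonexpansive: "\<And>u v. u \<in> {a..b} \<Longrightarrow> v \<in> {a..b} \<Longrightarrow> u \<le> v \<Longrightarrow> \<phi> v - \<phi> u \<le> v - u"
  shows "abs_cont_on a b (\<lambda>s. x (\<phi> s))"
proof (rule abs_cont_onI)
  fix e :: real assume "e > 0"
  with x obtain \<delta> where "\<delta> > 0" and small: "\<And>J. nonoverlapping_intervals c d J \<Longrightarrow>
      (\<Sum>(u,v)\<in>J. v - u) < \<delta> \<Longrightarrow> (\<Sum>(u,v)\<in>J. norm (x v - x u)) < e"
    by (metis abs_cont_onE)
  show "\<exists>\<delta>>0. \<forall>I. nonoverlapping_intervals a b I \<longrightarrow> (\<Sum>(u,v)\<in>I. v - u) < \<delta> \<longrightarrow>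
      (\<Sum>(u,v)\<in>I. norm (x (\<phi> v) - x (\<phi> u))) < e"
  proof (intro exI[of _ \<delta>] conjI allI impI \<open>\<delta> > 0\<close>)
    fix I assume I: "nonoverlapping_intervals a b I" and len: "(\<Sum>(u,v)\<in>I. v - u) < \<delta>"
    let ?J = "(\<lambda>(u,v). (\<phi> u, \<phi> v)) ` I"
    have "(\<Sum>(u,v)\<in>?J. v - u) = (\<Sum>(u,v)\<in>I. \<phi> v - \<phi> u)"
      by (rule sum_nonoverlapping_intervals_image[OF I mono]) simp
    also have "\<dots> \<le> (\<Sum>(u,v)\<in>I. v - u)"
      using I nonexpansive unfolding nonoverlapping_intervals_def by (intro sum_mono) auto
    finally have "(\<Sum>(u,v)\<in>?J. norm (x v - x u)) < e"
      using len by (intro small nonoverlapping_intervals_image[OF I mono range]) simp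
    then show "(\<Sum>(u,v)\<in>I. norm (x (\<phi> v) - x (\<phi> u))) < e"
      by (simp add: sum_nonoverlapping_intervals_image[OF I mono])
  qed
qed

lemma abs_cont_on_subinterval:
  assumes "abs_cont_on a b x" "a \<le> c" "d \<le> b"
  shows "abs_cont_on c d x"
  using abs_cont_on_compose[OF assms(1), of c d id] assms(2,3) by (auto simp: mono_on_def)

lemma abs_cont_on_imp_continuous_on:
  assumes "abs_cont_on a b x"
  shows "continuous_on {a..b} x"
  unfolding continuous_on_iff
proof (intro ballI allI impI)
  fix s e assume s: "s \<in> {a..b}" and "(0::real) < e"
  with assms obtain d where "d > 0" and small: "\<And>I. nonoverlapping_intervals a b I \<Longrightarrow>
      (\<Sum>(u,v)\<in>I. v - u) < d \<Longrightarrow> (\<Sum>(u,v)\<in>I. norm (x v - x u)) < e"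
    by (metis abs_cont_onE)
  show "\<exists>d>0. \<forall>s'\<in>{a..b}. dist s' s < d \<longrightarrow> dist (x s') (x s) < e"
  proof (intro exI[of _ d] conjI ballI impI \<open>d > 0\<close>)
    fix s' assume "s' \<in> {a..b}" "dist s' s < d"
    then have "(\<Sum>(u,v)\<in>{(min s s', max s s')}. norm (x v - x u)) < e"
      using s by (intro small) (auto simp: nonoverlapping_intervals_def dist_real_def)
    then show "dist (x s') (x s) < e"
      by (cases "s \<le> s'") (auto simp: dist_norm norm_minus_commute min_def max_def)
  qed
qed

lemma abs_cont_on_glue:
  assumes x: "abs_cont_on a t x" and z: "abs_cont_on t b z" and "x t = z t" "a \<le> t" "t \<le> b"
  shows "abs_cont_on a b (\<lambda>s. if s \<le> t then x s else z s)"
proof -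
  have "abs_cont_on a b (\<lambda>s. x (min s t))"
    using \<open>a \<le> t\<close> by (intro abs_cont_on_compose[OF x]) (auto simp: mono_on_def)
  moreover have "abs_cont_on a b (\<lambda>s. z (max s t))"
    using \<open>t \<le> b\<close> by (intro abs_cont_on_compose[OF z]) (auto simp: mono_on_def)
  ultimately have "abs_cont_on a b (\<lambda>s. x (min s t) + (z (max s t) + - z t))"
    by (intro abs_cont_on_add abs_cont_on_const)
  moreover have "(\<lambda>s. x (min s t) + (z (max s t) + - z t)) = (\<lambda>s. if s \<le> t then x s else z s)"
    using \<open>x t = z t\<close> by (auto simp: min_def max_def)
  ultimately show ?thesis by simp
qed

lemma lagr_ge_neg_H0: "ereal (- H x 0) \<le> lagr H x v"
  unfolding lagr_def by (rule SUP_upper2[of 0]) auto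

lemma lagr_bdd_below_on_path:
  fixes x :: "real \<Rightarrow> 'a::euclidean_space"
  assumes "continuous_on UNIV (\<lambda>y. H y 0)" "continuous_on {a..b} x"
  obtains c where "\<And>s v. s \<in> {a..b} \<Longrightarrow> ereal c \<le> lagr H (x s) v"
proof -
  have "continuous_on {a..b} (\<lambda>s. H (x s) 0)"
    using assms by (rule continuous_on_compose2) auto
  then have "bdd_above ((\<lambda>s. H (x s) 0) ` {a..b})"
    by (intro bounded_imp_bdd_above compact_imp_bounded compact_continuous_image compact_Icc)
  then obtain B where "\<forall>y \<in> (\<lambda>s. H (x s) 0) ` {a..b}. y \<le> B"
    by (auto simp: bdd_above_def)
  then have "H (x s) 0 \<le> B" if "s \<in> {a..b}" for s
    using that by blast
  then have "ereal (- B) \<le> lagr H (x s) v" if "s \<in> {a..b}" for s v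
    using that by (intro order_trans[OF _ lagr_ge_neg_H0]) simp
  then show ?thesis by (rule that)
qed

lemma action_split:
  assumes "continuous_on UNIV (\<lambda>y. H y 0)" "continuous_on {a..b} x" "a \<le> t" "t \<le> b"
  shows "action H a b x = action H a t x + action H t b x"
proof -
  obtain c where "\<And>s v. s \<in> {a..b} \<Longrightarrow> ereal c \<le> lagr H (x s) v"
    using lagr_bdd_below_on_path[where H=H and x=x, OF assms(1,2)] by blast
  then show ?thesis
    unfolding action_def using assms(3,4) by (intro eintegral_split) auto
qed

lemma action_neq_MInfty:
  assumes "continuous_on UNIV (\<lambda>y. H y 0)" "continuous_on {a..b} x"
  shows "action H a b x \<noteq> -\<infinity>"
proof -
  obtain c where "\<And>s v. s \<in> {a..b} \<Longrightarrow> ereal c \<le> lagr H (x s) v"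
    using lagr_bdd_below_on_path[where H=H and x=x, OF assms] by blast
  then show ?thesis
    unfolding action_def by (intro eintegral_neq_MInfty) auto
qed

lemma action_cong:
  assumes "\<And>s. a < s \<Longrightarrow> s < b \<Longrightarrow> x s = y s"
  shows "action H a b x = action H a b y"
  unfolding action_def
proof (rule eintegral_cong)
  fix s assume s: "a < s" "s < b"
  have "eventually (\<lambda>r. r \<in> {a<..<b}) (nhds s)"
    using s by (intro eventually_nhds_in_open) auto
  then have "vector_derivative x (at s) = vector_derivative y (at s)"
    using assms by (intro vector_derivative_cong_eq) (auto elim!: eventually_mono)
  then show "lagr H (x s) (vector_derivative x (at s)) = lagr H (y s) (vector_derivative y (at s))"
    using assms s by simp
qed

lemma action_glue:
  assumes H0: "continuous_on UNIV (\<lambda>y. H y 0)"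
    and x: "abs_cont_on a t x" and z: "abs_cont_on t b z" and "x t = z t" "a \<le> t" "t \<le> b"
  shows "action H a b (\<lambda>s. if s \<le> t then x s else z s) = action H a t x + action H t b z"
proof -
  let ?w = "\<lambda>s. if s \<le> t then x s else z s"
  have "continuous_on {a..b} ?w"
    using abs_cont_on_glue[OF assms(2-6)] by (rule abs_cont_on_imp_continuous_on)
  then have "action H a b ?w = action H a t ?w + action H t b ?w"
    by (rule action_split[of H, OF H0 _ assms(5,6)])
  also have "action H a t ?w = action H a t x"
    by (rule action_cong) simp
  also have "action H t b ?w = action H t b z"
    by (rule action_cong) simp
  finally show ?thesis .
qed

lemma valU_le:
  assumes "abs_cont_on 0 t x"
  shows "valU H g0 t (x t) \<le> ereal (g0 (x 0)) + action H 0 t x"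
  unfolding valU_def by (rule INF_lower) (use assms in auto)

lemma valW_ge:
  assumes "abs_cont_on t T x"
  shows "ereal (gT (x T)) - action H t T x \<le> valW H gT T t (x t)"
  unfolding valW_def by (rule SUP_upper) (use assms in auto)

lemma valU_initial [simp]: "valU H g0 0 y = ereal (g0 y)"
proof -
  have "{x. abs_cont_on 0 0 x \<and> x 0 = y} \<noteq> {}"
    using abs_cont_on_const by blast
  then show ?thesis
    unfolding valU_def action_def by (subst INF_cong[OF refl, of _ _ "\<lambda>_. ereal (g0 y)"]) simp_all
qed

lemma valW_terminal [simp]: "valW H gT T T y = ereal (gT y)"
proof -
  have "{x. abs_cont_on T T x \<and> x T = y} \<noteq> {}"
    using abs_cont_on_const by blast
  then show ?thesis
    unfolding valW_def action_def by (subst SUP_cong[OF refl, of _ _ "\<lambda>_. ereal (gT y)"]) simp_all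
qed

lemma valW_le_valU:
  assumes H0: "continuous_on UNIV (\<lambda>y. H y 0)" and terminal: "\<And>y. ereal (gT y) \<le> valU H g0 T y"
    and "0 \<le> t" "t \<le> T"
  shows "valW H gT T t y \<le> valU H g0 t y"
  unfolding valW_def
proof (rule SUP_least)
  fix z assume "z \<in> {x. abs_cont_on t T x \<and> x t = y}"
  then have z: "abs_cont_on t T z" and "z t = y" by auto
  show "ereal (gT (z T)) - action H t T z \<le> valU H g0 t y"
    unfolding valU_def
  proof (rule INF_greatest)
    fix x assume "x \<in> {x. abs_cont_on 0 t x \<and> x t = y}"
    then have x: "abs_cont_on 0 t x" and "z t = x t" using \<open>z t = y\<close> by auto
    let ?w = "\<lambda>s. if s \<le> t then x s else z s"
    have w: "abs_cont_on 0 T ?w"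
      using abs_cont_on_glue[OF x z] \<open>z t = x t\<close> assms(3,4) by simp
    have "ereal (gT (z T)) \<le> valU H g0 T (?w T)"
      using terminal[of "?w T"] \<open>z t = x t\<close> assms(4) by (cases "T \<le> t") auto
    also have "\<dots> \<le> ereal (g0 (x 0)) + action H 0 T ?w"
      using valU_le[OF w] assms(3) by simp
    also have "action H 0 T ?w = action H 0 t x + action H t T z"
      using action_glue[of H, OF H0 x z] \<open>z t = x t\<close> assms(3,4) by simp
    finally have "ereal (gT (z T)) \<le> ereal (g0 (x 0)) + (action H 0 t x + action H t T z)" .
    moreover have "action H 0 t x \<noteq> -\<infinity>" "action H t T z \<noteq> -\<infinity>"
      using H0 x z by (simp_all add: action_neq_MInfty abs_cont_on_imp_continuous_on)
    ultimately show "ereal (gT (z T)) - action H t T z \<le> ereal (g0 (x 0)) + action H 0 t x"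
      by (cases "action H 0 t x"; cases "action H t T z") auto
  qed
qed

lemma valU_le_valW_along_optimal:
  assumes H0: "continuous_on UNIV (\<lambda>y. H y 0)" and x: "abs_cont_on 0 T x"
    and opt: "ereal (gT (x T)) = ereal (g0 (x 0)) + action H 0 T x" and "0 \<le> t" "t \<le> T"
  shows "valU H g0 t (x t) \<le> valW H gT T t (x t)"
proof -
  have x_0t: "abs_cont_on 0 t x" and x_tT: "abs_cont_on t T x"
    using abs_cont_on_subinterval[OF x] assms(4,5) by auto
  have "action H 0 T x = action H 0 t x + action H t T x"
    using H0 abs_cont_on_imp_continuous_on[OF x] assms(4,5) by (rule action_split)
  moreover have "action H 0 t x \<noteq> -\<infinity>" "action H t T x \<noteq> -\<infinity>"
    using H0 x_0t x_tT by (simp_all add: action_neq_MInfty abs_cont_on_imp_continuous_on)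
  ultimately have "ereal (g0 (x 0)) + action H 0 t x = ereal (gT (x T)) - action H t T x"
    using opt by (cases "action H 0 t x"; cases "action H t T x") auto
  then show ?thesis
    using valU_le[OF x_0t, of H g0] valW_ge[OF x_tT, of gT H] by simp
qed

theorem proposition5p6:
  fixes H :: "'a::euclidean_space \<Rightarrow> 'a \<Rightarrow> real"
    and g0 gT :: "'a \<Rightarrow> real"
    and T M :: real
    and xbar :: "real \<Rightarrow> 'a"
  assumes T_pos: "T > 0"
    and H_convex: "\<And>x. convex_on UNIV (H x)"
    and M_nonneg: "M \<ge> 0"
    and H_lip_p: "\<And>x p q. \<bar>H x p - H x q\<bar> \<le> M * (1 + norm x) * norm (p - q)"
    and H_lip_x: "\<And>x y p. \<bar>H x p - H y p\<bar> \<le> M * (1 + norm p) * norm (x - y)"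
    and g0_cont: "continuous_on UNIV g0"
    and gT_cont: "continuous_on UNIV gT"
    and xbar_ac: "abs_cont_on 0 T xbar"
    and xbar_opt: "valU H g0 T (xbar T) = valU H g0 0 (xbar 0) + action H 0 T xbar"
    and UW_T: "\<And>y. valU H g0 T y = valW H gT T T y"
  shows "valW H gT T 0 (xbar 0) = valW H gT T T (xbar T) - action H 0 T xbar
     \<and> (\<forall>t\<in>{0..T}. valU H g0 t (xbar t) = valW H gT T t (xbar t))"
proof -
  have "M-lipschitz_on UNIV (\<lambda>y. H y 0)"
    using H_lip_x[where p=0] M_nonneg by (intro lipschitz_onI) (simp_all add: dist_real_def dist_norm)
  then have H0: "continuous_on UNIV (\<lambda>y. H y 0)"
    by (rule lipschitz_on_continuous_on)
  have UT: "valU H g0 T y = ereal (gT y)" for y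
    using UW_T by simp
  have opt: "ereal (gT (xbar T)) = ereal (g0 (xbar 0)) + action H 0 T xbar"
    using xbar_opt by (simp add: UT)
  have UW: "valU H g0 t (xbar t) = valW H gT T t (xbar t)" if "t \<in> {0..T}" for t
  proof (rule order.antisym)
    show "valU H g0 t (xbar t) \<le> valW H gT T t (xbar t)"
      using that
      by (intro valU_le_valW_along_optimal[where H=H and ?g0.0=g0 and gT=gT, OF H0 xbar_ac opt]) auto
    show "valW H gT T t (xbar t) \<le> valU H g0 t (xbar t)"
      using that by (intro valW_le_valU[where H=H, OF H0]) (auto simp: UT)
  qed
  have "valW H gT T 0 (xbar 0) = ereal (g0 (xbar 0))"
    using UW[of 0] T_pos by simp
  also have "\<dots> = ereal (gT (xbar T)) - action H 0 T xbar"
    using opt by (cases "action H 0 T xbar") simp_all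
  finally have "valW H gT T 0 (xbar 0) = valW H gT T T (xbar T) - action H 0 T xbar"
    by simp
  with UW show ?thesis by blast
qed

end
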